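(* Let $f:2^V\to\mathbb{R}_+$ be a nonnegative, normalized ($f(\emptyset)=0$) supermodular function that is $r$-decomposable, and let $k$ be an integer with $r<k\le n-1$. Run greedy peeling: $S_n\gets V$; for $i=n,\dots,k+1$, choose $v_i\in\arg\min_{v\in S_i}f(v\mid S_i\setminus\{v\})$ and set $S_{i-1}\gets S_i\setminus\{v_i\}$. Then for all integers $i,j$ with $k\le i\le j\le n$, $$f(S_i)\ \ge\ \frac{\binom{i}{r}}{\binom{j}{r}}\,f(S_j)\ \ge\ \frac{r!}{r^r}\cdot\frac{i^r}{j^r}\,f(S_j).$$
   Context: $V$ is a finite set with $n=|V|$; $f(v\mid S)=f(S\cup\{v\})-f(S)$. Supermodular: $f(A)+f(B)\le f(A\cup B)+f(A\cap B)$ for all $A,B\subseteq V$. $f$ is $r$-decomposable if there exist subsets $V_1,\dots,V_m\subseteq V$ with $|V_i|\le r$ and nonnegative supermodular $f_i:2^{V_i}\to\mathbb{R}_+$ with $f(S)=\sum_i f_i(S\cap V_i)$ for all $S\subseteq V$. *)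

theory Defs
  imports Complex_Main
begin

definition marg :: "('a set \<Rightarrow> real) \<Rightarrow> 'a \<Rightarrow> 'a set \<Rightarrow> real" where
  "marg f v S = f (S \<union> {v}) - f S"

definition supermodular_on :: "'a set \<Rightarrow> ('a set \<Rightarrow> real) \<Rightarrow> bool" where
  "supermodular_on W f \<longleftrightarrow>
     (\<forall>A B. A \<subseteq> W \<longrightarrow> B \<subseteq> W \<longrightarrow> f A + f B \<le> f (A \<union> B) + f (A \<inter> B))"

definition r_decomposable :: "nat \<Rightarrow> 'a set \<Rightarrow> ('a set \<Rightarrow> real) \<Rightarrow> bool" where
  "r_decomposable r V f \<longleftrightarrow>
     (\<exists>(m::nat) (Vs :: nat \<Rightarrow> 'a set) (fs :: nat \<Rightarrow> 'a set \<Rightarrow> real).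
        (\<forall>i<m. Vs i \<subseteq> V \<and> card (Vs i) \<le> r \<and> supermodular_on (Vs i) (fs i)
               \<and> (\<forall>T. T \<subseteq> Vs i \<longrightarrow> 0 \<le> fs i T)) \<and>
        (\<forall>S. S \<subseteq> V \<longrightarrow> f S = (\<Sum>i<m. fs i (S \<inter> Vs i))))"

definition greedy_peeling :: "'a set \<Rightarrow> ('a set \<Rightarrow> real) \<Rightarrow> nat \<Rightarrow> (nat \<Rightarrow> 'a set) \<Rightarrow> bool" where
  "greedy_peeling V f k S \<longleftrightarrow>
     S (card V) = V \<and>
     (\<forall>i. k < i \<and> i \<le> card V \<longrightarrow>
        (\<exists>v\<in>S i. (\<forall>u\<in>S i. marg f v (S i - {v}) \<le> marg f u (S i - {u}))
                  \<and> S (i - 1) = S i - {v}))"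

end

theory Submission
  imports Defs
begin

(* Write f = \<Sum>t f_t(_ \<inter> V_t). Removing v from S changes the t-th term only if v \<in> V_t, and then
   by at most f_t(S \<inter> V_t) since f_t \<ge> 0; as |V_t| \<le> r, the marginals f(v | S - {v}) summed over
   v \<in> S total at most r f(S). The greedy vertex has the smallest marginal, hence at most r f(S_i)/i,
   so f(S_{i-1}) \<ge> (1 - r/i) f(S_i) = binom(i-1,r)/binom(i,r) f(S_i), and the ratios telescope.
   The second inequality is binom(i,r) \<ge> (i/r)^r together with binom(j,r) \<le> j^r/r!. *)

lemma sum_diff_restrict_le_card:
  fixes g :: "'a set \<Rightarrow> real"
  assumes "finite S" and nonneg: "\<And>T. T \<subseteq> W \<Longrightarrow> 0 \<le> g T"
  shows "(\<Sum>v\<in>S. g (S \<inter> W) - g ((S - {v}) \<inter> W)) \<le> real (card (S \<inter> W)) * g (S \<inter> W)"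
proof -
  have "(\<Sum>v\<in>S. g (S \<inter> W) - g ((S - {v}) \<inter> W)) \<le> (\<Sum>v\<in>S. if v \<in> W then g (S \<inter> W) else 0)"
  proof (rule sum_mono)
    fix v assume "v \<in> S"
    show "g (S \<inter> W) - g ((S - {v}) \<inter> W) \<le> (if v \<in> W then g (S \<inter> W) else 0)"
    proof (cases "v \<in> W")
      case True
      then show ?thesis using nonneg[of "(S - {v}) \<inter> W"] by auto
    next
      case False
      then have "(S - {v}) \<inter> W = S \<inter> W" by auto
      then show ?thesis using False by simp
    qed
  qed
  also have "\<dots> = real (card (S \<inter> W)) * g (S \<inter> W)"
    using \<open>finite S\<close> by (simp add: sum.If_cases)
  finally show ?thesis .
qed

lemma r_decomposable_sum_marg_le:
  fixes f :: "'a set \<Rightarrow> real"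
  assumes "finite V" and "r_decomposable r V f" and "S \<subseteq> V"
  shows "(\<Sum>v\<in>S. marg f v (S - {v})) \<le> real r * f S"
proof -
  obtain m :: nat and Vs :: "nat \<Rightarrow> 'a set" and fs :: "nat \<Rightarrow> 'a set \<Rightarrow> real"
    where pieces: "\<forall>t<m. Vs t \<subseteq> V \<and> card (Vs t) \<le> r \<and> supermodular_on (Vs t) (fs t)
                     \<and> (\<forall>T. T \<subseteq> Vs t \<longrightarrow> 0 \<le> fs t T)"
      and decomp: "\<forall>T. T \<subseteq> V \<longrightarrow> f T = (\<Sum>t<m. fs t (T \<inter> Vs t))"
    using \<open>r_decomposable r V f\<close> unfolding r_decomposable_def by (elim exE conjE) (rule that)
  have "finite S" using \<open>finite V\<close> \<open>S \<subseteq> V\<close> finite_subset by blast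
  have "(\<Sum>v\<in>S. marg f v (S - {v})) = (\<Sum>v\<in>S. \<Sum>t<m. fs t (S \<inter> Vs t) - fs t ((S - {v}) \<inter> Vs t))"
  proof (rule sum.cong)
    fix v assume "v \<in> S"
    then have "S - {v} \<union> {v} = S" by auto
    then have "marg f v (S - {v}) = f S - f (S - {v})" by (simp add: marg_def)
    also have "\<dots> = (\<Sum>t<m. fs t (S \<inter> Vs t) - fs t ((S - {v}) \<inter> Vs t))"
      using decomp \<open>S \<subseteq> V\<close> by (simp add: sum_subtractf subset_trans[of "S - {v}" S V])
    finally show "marg f v (S - {v}) = \<dots>" .
  qed simp
  also have "\<dots> = (\<Sum>t<m. \<Sum>v\<in>S. fs t (S \<inter> Vs t) - fs t ((S - {v}) \<inter> Vs t))"
    by (rule sum.swap)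
  also have "\<dots> \<le> (\<Sum>t<m. real r * fs t (S \<inter> Vs t))"
  proof (rule sum_mono)
    fix t assume "t \<in> {..<m}"
    then have Vt: "Vs t \<subseteq> V" "card (Vs t) \<le> r" "\<And>T. T \<subseteq> Vs t \<Longrightarrow> 0 \<le> fs t T"
      using pieces by auto
    have "finite (Vs t)" using Vt(1) \<open>finite V\<close> finite_subset by blast
    then have "card (S \<inter> Vs t) \<le> r" using Vt(2) card_mono[of "Vs t" "S \<inter> Vs t"] by simp
    then have "real (card (S \<inter> Vs t)) * fs t (S \<inter> Vs t) \<le> real r * fs t (S \<inter> Vs t)"
      using Vt(3)[of "S \<inter> Vs t"] by (intro mult_right_mono) auto
    with sum_diff_restrict_le_card[where g = "fs t" and W = "Vs t", OF \<open>finite S\<close> Vt(3)]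
    show "(\<Sum>v\<in>S. fs t (S \<inter> Vs t) - fs t ((S - {v}) \<inter> Vs t)) \<le> real r * fs t (S \<inter> Vs t)"
      by linarith
  qed
  also have "\<dots> = real r * f S"
    using decomp \<open>S \<subseteq> V\<close> by (simp add: sum_distrib_left)
  finally show ?thesis .
qed

lemma greedy_peeling_subset_card:
  assumes "finite V" and "greedy_peeling V f k S" and "k \<le> i" and "i \<le> card V"
  shows "S i \<subseteq> V \<and> card (S i) = i"
  using \<open>i \<le> card V\<close>
proof (induction i rule: inc_induct)
  case base
  then show ?case using \<open>greedy_peeling V f k S\<close> by (simp add: greedy_peeling_def)
next
  case (step m)
  have "k < Suc m" "Suc m \<le> card V" using \<open>k \<le> i\<close> step.hyps by simp_all
  then obtain v where "v \<in> S (Suc m)" and "S m = S (Suc m) - {v}"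
    using \<open>greedy_peeling V f k S\<close> unfolding greedy_peeling_def by fastforce
  moreover have "finite (S (Suc m))" using step.IH \<open>finite V\<close> finite_subset by blast
  ultimately show ?case using step.IH by auto
qed

lemma greedy_peeling_step:
  fixes f :: "'a set \<Rightarrow> real"
  assumes "finite V" and "r_decomposable r V f" and "greedy_peeling V f k S"
    and "k < i" and "i \<le> card V"
  shows "(real i - real r) * f (S i) \<le> real i * f (S (i - 1))"
proof -
  obtain v where "v \<in> S i" and v_min: "\<forall>u\<in>S i. marg f v (S i - {v}) \<le> marg f u (S i - {u})"
    and S_pred: "S (i - 1) = S i - {v}"
    using \<open>greedy_peeling V f k S\<close> \<open>k < i\<close> \<open>i \<le> card V\<close> unfolding greedy_peeling_def by blast
  have Si: "S i \<subseteq> V" "card (S i) = i"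
    using greedy_peeling_subset_card[OF \<open>finite V\<close> \<open>greedy_peeling V f k S\<close>, of i]
      \<open>k < i\<close> \<open>i \<le> card V\<close> by simp_all
  have "real i * marg f v (S i - {v}) \<le> (\<Sum>u\<in>S i. marg f u (S i - {u}))"
    using sum_bounded_below[of "S i" "marg f v (S i - {v})"] v_min Si(2) by simp
  also have "\<dots> \<le> real r * f (S i)"
    using r_decomposable_sum_marg_le[OF \<open>finite V\<close> \<open>r_decomposable r V f\<close> Si(1)] .
  finally have "real i * marg f v (S i - {v}) \<le> real r * f (S i)" .
  moreover have "S i - {v} \<union> {v} = S i" using \<open>v \<in> S i\<close> by auto
  then have "f (S (i - 1)) = f (S i) - marg f v (S i - {v})"
    unfolding S_pred marg_def by simp
  then have "real i * f (S (i - 1)) = real i * f (S i) - real i * marg f v (S i - {v})"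
    by (simp add: right_diff_distrib)
  ultimately show ?thesis by (simp add: left_diff_distrib)
qed

lemma binomial_ratio_chain:
  fixes a :: "nat \<Rightarrow> real"
  assumes step: "\<And>m. k \<le> m \<Longrightarrow> m < j \<Longrightarrow> (real (Suc m) - real r) * a (Suc m) \<le> real (Suc m) * a m"
    and "r \<le> k" and "k \<le> i" and "i \<le> j"
  shows "real (i choose r) * a j \<le> real (j choose r) * a i"
  using \<open>i \<le> j\<close>
proof (induction i rule: inc_induct)
  case base
  then show ?case by simp
next
  case (step m)
  have "r < Suc m" using \<open>r \<le> k\<close> \<open>k \<le> i\<close> \<open>i \<le> m\<close> by simp
  have absorb: "(real (Suc m) - real r) * real (Suc m choose r) = real (Suc m) * real (m choose r)"
    using binomial_absorb_comp[of "Suc m" r] \<open>r < Suc m\<close> by (metis diff_Suc_1 of_nat_diff of_nat_mult less_imp_le)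
  have "real (Suc m) * (real (m choose r) * a j) = (real (Suc m) - real r) * (real (Suc m choose r) * a j)"
    using absorb by (simp add: algebra_simps)
  also have "\<dots> \<le> (real (Suc m) - real r) * (real (j choose r) * a (Suc m))"
    using step.IH \<open>r < Suc m\<close> by (intro mult_left_mono) auto
  also have "\<dots> = real (j choose r) * ((real (Suc m) - real r) * a (Suc m))"
    by (simp add: algebra_simps)
  also have "\<dots> \<le> real (j choose r) * (real (Suc m) * a m)"
    using assms(1) \<open>k \<le> i\<close> step.hyps by (intro mult_left_mono) auto
  also have "\<dots> = real (Suc m) * (real (j choose r) * a m)"
    by (simp add: algebra_simps)
  finally show ?case by (rule mult_left_le_imp_le) simp
qed

lemma fact_div_pow_le_binomial_ratio:
  fixes i j r :: nat
  assumes "r \<le> i" and "i \<le> j"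
  shows "fact r / real r ^ r * (real i ^ r / real j ^ r) \<le> real (i choose r) / real (j choose r)"
proof (cases "i = 0")
  case True
  then show ?thesis using assms by simp
next
  case False
  have "0 < real (j choose r)" and "0 < real j ^ r" using assms False by simp_all
  have "fact r / real r ^ r * (real i ^ r / real j ^ r) = fact r * (real i / real r) ^ r / real j ^ r"
    by (simp add: power_divide)
  also have "\<dots> \<le> fact r * real (i choose r) / real j ^ r"
    using binomial_ge_n_over_k_pow_k[OF \<open>r \<le> i\<close>] \<open>0 < real j ^ r\<close>
    by (intro divide_right_mono mult_left_mono) auto
  also have "\<dots> \<le> fact r * real (i choose r) / (real (j choose r) * fact r)"
  proof (rule divide_left_mono)
    show "real (j choose r) * fact r \<le> real j ^ r"
      using binomial_fact_pow[of j r] by (metis of_nat_fact of_nat_le_iff of_nat_mult of_nat_power)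
  qed (use \<open>0 < real (j choose r)\<close> \<open>0 < real j ^ r\<close> in auto)
  also have "\<dots> = real (i choose r) / real (j choose r)" by simp
  finally show ?thesis .
qed

theorem lemma1:
  fixes V :: "'a set" and f :: "'a set \<Rightarrow> real" and r k :: nat and S :: "nat \<Rightarrow> 'a set"
  assumes "finite V"
    and "\<forall>T. T \<subseteq> V \<longrightarrow> 0 \<le> f T"
    and "f {} = 0"
    and "supermodular_on V f"
    and "r_decomposable r V f"
    and "r < k" and "k \<le> card V - 1"
    and "greedy_peeling V f k S"
  shows "\<forall>i j. k \<le> i \<and> i \<le> j \<and> j \<le> card V \<longrightarrow>
           real (i choose r) / real (j choose r) * f (S j) \<le> f (S i) \<and>
           fact r / real r ^ r * (real i ^ r / real j ^ r) * f (S j)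
             \<le> real (i choose r) / real (j choose r) * f (S j)"
proof (intro allI impI conjI; elim conjE)
  fix i j assume "k \<le> i" "i \<le> j" "j \<le> card V"
  have "real (i choose r) * f (S j) \<le> real (j choose r) * f (S i)"
  proof (rule binomial_ratio_chain[where k = k])
    fix m assume "k \<le> m" "m < j"
    then show "(real (Suc m) - real r) * f (S (Suc m)) \<le> real (Suc m) * f (S m)"
      using greedy_peeling_step[OF assms(1,5,8), of "Suc m"] \<open>j \<le> card V\<close> by simp
  qed (use \<open>r < k\<close> \<open>k \<le> i\<close> \<open>i \<le> j\<close> in auto)
  moreover have "0 < real (j choose r)" using \<open>r < k\<close> \<open>k \<le> i\<close> \<open>i \<le> j\<close> by simp
  ultimately show "real (i choose r) / real (j choose r) * f (S j) \<le> f (S i)"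
    by (simp add: field_simps)
  have "0 \<le> f (S j)"
    using assms(2) greedy_peeling_subset_card[OF assms(1,8)] \<open>k \<le> i\<close> \<open>i \<le> j\<close> \<open>j \<le> card V\<close> by simp
  then show "fact r / real r ^ r * (real i ^ r / real j ^ r) * f (S j)
             \<le> real (i choose r) / real (j choose r) * f (S j)"
    using fact_div_pow_le_binomial_ratio[of r i j] \<open>r < k\<close> \<open>k \<le> i\<close> \<open>i \<le> j\<close>
    by (intro mult_right_mono) auto
qed

end
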